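(* Let $H=\mathrm{diag}(\lambda_1,\dots,\lambda_d)$ with $\lambda_1\ge\dots\ge\lambda_d>0$, in the setting of the context. Assume $\mathbb{E}[n_tn_t^\top]\preceq\sigma^2H$ for all $t$. Run coordinate-wise SGD from $w_1$ with step sizes $\eta_{t,j}=\frac{1}{\lambda_j(t+1)}$, that is, $$w_{t+1,j}=w_{t,j}-\eta_{t,j}\,[H(\xi_t)w_t-b(\xi_t)]_j,\qquad t=1,2,\dots$$ Then for every $t\ge1$, $$2\mathbb{E}[f(w_{t+1})-f(w_* )]=\mathbb{E}\left[\sum_{j=1}^d\lambda_j(w_{t+1,j}-w_{*,j})^2\right]\le\frac{\sum_{j=1}^d\lambda_j(w_{1,j}-w_{*,j})^2}{(t+1)^2}+\frac{t}{(t+1)^2}\,d\sigma^2 .$$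
   Context: Let $\xi$ be a random data sample, $H(\xi)\in\mathbb{R}^{d\times d}$ a random symmetric matrix and $b(\xi)\in\mathbb{R}^d$ a random vector. Define $f(w,\xi)=\frac12w^\top H(\xi)w-b(\xi)^\top w$ and $f(w)=\mathbb{E}_\xi f(w,\xi)$. Set $H=\mathbb{E}H(\xi)$ and $b=\mathbb{E}b(\xi)$, with $w_*=H^{-1}b$. $\xi_1,\xi_2,\dots$ are i.i.d. copies of $\xi$, the initial point $w_1$ is deterministic, and $n_t=(Hw_t-b)-(H(\xi_t)w_t-b(\xi_t))$. The notation $w_{t,j}$ denotes the $j$-th coordinate of $w_t$. *)

theory Defs
  imports "HOL-Probability.Probability"
begin

text \<open>Vectors in R^d are represented as functions nat => real, only the coordinates
  0..d-1 are meaningful; d x d matrices as nat => nat => real.\<close>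

definition quad :: "nat \<Rightarrow> (nat \<Rightarrow> nat \<Rightarrow> real) \<Rightarrow> (nat \<Rightarrow> real) \<Rightarrow> real" where
  "quad d A v = (\<Sum>i<d. \<Sum>j<d. v i * A i j * v j)"

definition psd_le :: "nat \<Rightarrow> (nat \<Rightarrow> nat \<Rightarrow> real) \<Rightarrow> (nat \<Rightarrow> nat \<Rightarrow> real) \<Rightarrow> bool" where
  "psd_le d A B \<longleftrightarrow> (\<forall>v. quad d (\<lambda>i j. B i j - A i j) v \<ge> 0)"

definition loss :: "nat \<Rightarrow> ('s \<Rightarrow> nat \<Rightarrow> nat \<Rightarrow> real) \<Rightarrow> ('s \<Rightarrow> nat \<Rightarrow> real)
    \<Rightarrow> (nat \<Rightarrow> real) \<Rightarrow> 's \<Rightarrow> real" where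
  "loss d Hf bf w x = quad d (Hf x) w / 2 - (\<Sum>j<d. bf x j * w j)"

definition obj :: "'a measure \<Rightarrow> ('a \<Rightarrow> 's) \<Rightarrow> nat \<Rightarrow> ('s \<Rightarrow> nat \<Rightarrow> nat \<Rightarrow> real)
    \<Rightarrow> ('s \<Rightarrow> nat \<Rightarrow> real) \<Rightarrow> (nat \<Rightarrow> real) \<Rightarrow> real" where
  "obj M X d Hf bf w = integral\<^sup>L M (\<lambda>\<omega>. loss d Hf bf w (X \<omega>))"

text \<open>Coordinate-wise SGD: cw_sgd ... t omega = w_t (meaningful for t >= 1; w_0 := w_1 is junk).
  w_{t+1,j} = w_{t,j} - 1/(lambda_j (t+1)) [H(xi_t) w_t - b(xi_t)]_j.\<close>
fun cw_sgd :: "nat \<Rightarrow> (nat \<Rightarrow> real) \<Rightarrow> (nat \<Rightarrow> real) \<Rightarrow> ('s \<Rightarrow> nat \<Rightarrow> nat \<Rightarrow> real)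
    \<Rightarrow> ('s \<Rightarrow> nat \<Rightarrow> real) \<Rightarrow> (nat \<Rightarrow> 'a \<Rightarrow> 's) \<Rightarrow> nat \<Rightarrow> 'a \<Rightarrow> nat \<Rightarrow> real" where
  "cw_sgd d lam w1 Hf bf \<xi> 0 \<omega> = w1"
| "cw_sgd d lam w1 Hf bf \<xi> (Suc 0) \<omega> = w1"
| "cw_sgd d lam w1 Hf bf \<xi> (Suc (Suc n)) \<omega> =
     (\<lambda>j. cw_sgd d lam w1 Hf bf \<xi> (Suc n) \<omega> j
        - 1 / (lam j * real (Suc n + 1)) *
          ((\<Sum>k<d. Hf (\<xi> (Suc n) \<omega>) j k * cw_sgd d lam w1 Hf bf \<xi> (Suc n) \<omega> k)
           - bf (\<xi> (Suc n) \<omega>) j))"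

definition noise :: "nat \<Rightarrow> (nat \<Rightarrow> nat \<Rightarrow> real) \<Rightarrow> (nat \<Rightarrow> real) \<Rightarrow> ('s \<Rightarrow> nat \<Rightarrow> nat \<Rightarrow> real)
    \<Rightarrow> ('s \<Rightarrow> nat \<Rightarrow> real) \<Rightarrow> (nat \<Rightarrow> real) \<Rightarrow> 's \<Rightarrow> nat \<Rightarrow> real" where
  "noise d Hm bm Hf bf w x j =
     ((\<Sum>k<d. Hm j k * w k) - bm j) - ((\<Sum>k<d. Hf x j k * w k) - bf x j)"

end

theory Submission
  imports Defs
begin

(*
  Write e_(t,j) = w_(t,j) - w*_j. Since E H(xi) = diag lambda and the step size is
  1/(lambda_j (t+1)), the update reads e_(t+1,j) = t/(t+1) e_(t,j) + n_(t,j) / (lambda_j (t+1)).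
  The iterate w_t is a function of xi_1, ..., xi_(t-1) only, hence independent of xi_t; as n_t is
  affine in the centred H(xi_t), b(xi_t) with coefficients depending on w_t, it is uncorrelated
  with e_t. So D_t = sum_j lambda_j E e_(t,j)^2 satisfies
    (t+1)^2 D_(t+1) = t^2 D_t + sum_j E n_(t,j)^2 / lambda_j <= t^2 D_t + d sigma^2,
  the diagonal of E[n_t n_t^T] <= sigma^2 H bounding E n_(t,j)^2 by sigma^2 lambda_j.
  Telescoping gives (t+1)^2 D_(t+1) <= D_1 + t d sigma^2. The identity with the excess risk
  holds pointwise, f being quadratic with Hessian H and minimiser w*.
*)

lemma quad_diag:
  assumes "\<And>i j. i < d \<Longrightarrow> j < d \<Longrightarrow> A i j = (if i = j then a i else 0)"
  shows "quad d A v = (\<Sum>i<d. a i * (v i)\<^sup>2)"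
  unfolding quad_def
proof (rule sum.cong)
  fix i assume "i \<in> {..<d}"
  then have "(\<Sum>j<d. v i * A i j * v j) = (\<Sum>j<d. if j = i then a i * (v i)\<^sup>2 else 0)"
    using assms by (intro sum.cong) (auto simp: power2_eq_square)
  with \<open>i \<in> {..<d}\<close> show "(\<Sum>j<d. v i * A i j * v j) = a i * (v i)\<^sup>2" by simp
qed simp

lemma quad_unit_vector: "j < d \<Longrightarrow> quad d A (\<lambda>i. if i = j then 1 else 0) = A j j"
  unfolding quad_def by (simp add: if_distrib if_distribR sum.If_cases)

lemma psd_le_diag:
  assumes "psd_le d A B" "j < d"
  shows "A j j \<le> B j j"
proof -
  have "0 \<le> quad d (\<lambda>i j. B i j - A i j) (\<lambda>i. if i = j then 1 else 0)"
    using assms(1) unfolding psd_le_def by blast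
  then show ?thesis using quad_unit_vector[OF assms(2)] by simp
qed

lemma integrable_mult_of_square_integrable:
  fixes f g :: "'a \<Rightarrow> real"
  assumes "f \<in> borel_measurable M" "g \<in> borel_measurable M"
    and "integrable M (\<lambda>x. (f x)\<^sup>2)" "integrable M (\<lambda>x. (g x)\<^sup>2)"
  shows "integrable M (\<lambda>x. f x * g x)"
proof (rule Bochner_Integration.integrable_bound)
  show "integrable M (\<lambda>x. (f x)\<^sup>2 + (g x)\<^sup>2)" using assms by simp
  have "\<bar>a * b\<bar> \<le> a\<^sup>2 + b\<^sup>2" for a b :: real
  proof -
    have "2 * \<bar>a\<bar> * \<bar>b\<bar> \<le> a\<^sup>2 + b\<^sup>2"
      using sum_squares_bound[of "\<bar>a\<bar>" "\<bar>b\<bar>"] by simp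
    moreover have "0 \<le> \<bar>a\<bar> * \<bar>b\<bar>" by simp
    ultimately show ?thesis unfolding abs_mult by linarith
  qed
  then show "AE x in M. norm (f x * g x) \<le> norm ((f x)\<^sup>2 + (g x)\<^sup>2)" by simp
qed (use assms in simp)

lemma power2_lincomb:
  "(a * x + b * y)\<^sup>2 = a\<^sup>2 * x\<^sup>2 + (2 * a * b) * (x * y) + b\<^sup>2 * y\<^sup>2" for a b x y :: real
  by (simp add: power2_sum power_mult_distrib algebra_simps)

lemma integrable_power2_lincomb:
  fixes f g :: "'a \<Rightarrow> real"
  assumes "f \<in> borel_measurable M" "g \<in> borel_measurable M"
    and "integrable M (\<lambda>x. (f x)\<^sup>2)" "integrable M (\<lambda>x. (g x)\<^sup>2)"
  shows "integrable M (\<lambda>x. (a * f x + b * g x)\<^sup>2)"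
  unfolding power2_lincomb using integrable_mult_of_square_integrable[OF assms] assms by simp

lemma integral_power2_lincomb_uncorrelated:
  fixes f g :: "'a \<Rightarrow> real"
  assumes "integrable M (\<lambda>x. (f x)\<^sup>2)" "integrable M (\<lambda>x. (g x)\<^sup>2)"
    and "integrable M (\<lambda>x. f x * g x)" "(\<integral>x. f x * g x \<partial>M) = 0"
  shows "(\<integral>x. (a * f x + b * g x)\<^sup>2 \<partial>M) = a\<^sup>2 * (\<integral>x. (f x)\<^sup>2 \<partial>M) + b\<^sup>2 * (\<integral>x. (g x)\<^sup>2 \<partial>M)"
  unfolding power2_lincomb using assms by simp

lemma integral_comp_eq_of_distr_eq:
  fixes g :: "'s \<Rightarrow> real"
  assumes "X \<in> measurable M S" "Y \<in> measurable M S" "distr M S X = distr M S Y"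
    and "g \<in> borel_measurable S"
  shows "integrable M (\<lambda>\<omega>. g (X \<omega>)) \<longleftrightarrow> integrable M (\<lambda>\<omega>. g (Y \<omega>))"
    and "(\<integral>\<omega>. g (X \<omega>) \<partial>M) = (\<integral>\<omega>. g (Y \<omega>) \<partial>M)"
  using integrable_distr_eq[OF assms(1,4)] integrable_distr_eq[OF assms(2,4)]
    integral_distr[OF assms(1,4)] integral_distr[OF assms(2,4)] assms(3)
  by simp_all

lemma (in prob_space) indep_var_integral_mult_eq_0:
  fixes X Y :: "'a \<Rightarrow> real"
  assumes "indep_var borel X borel Y" "integrable M X" "integrable M Y" "expectation Y = 0"
  shows "integrable M (\<lambda>\<omega>. X \<omega> * Y \<omega>)" and "expectation (\<lambda>\<omega>. X \<omega> * Y \<omega>) = 0"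
  using indep_var_integrable[OF assms(1-3)] indep_var_lebesgue_integral[OF assms(1-3)] assms(4)
  by simp_all

lemma bound_of_scaled_recursion:
  fixes D :: "nat \<Rightarrow> real"
  assumes "\<And>s. 1 \<le> s \<Longrightarrow> (real s + 1)\<^sup>2 * D (Suc s) \<le> (real s)\<^sup>2 * D s + c"
  shows "(real t + 1)\<^sup>2 * D (Suc t) \<le> D 1 + real t * c"
proof (induction t)
  case (Suc t)
  have "(real (Suc t) + 1)\<^sup>2 * D (Suc (Suc t)) \<le> (real t + 1)\<^sup>2 * D (Suc t) + c"
    using assms[of "Suc t"] by (simp add: add.commute)
  with Suc show ?case by (simp add: algebra_simps)
qed simp

lemma obj_eq_quad_mean:
  assumes "\<And>i j. i < d \<Longrightarrow> j < d \<Longrightarrow> integrable M (\<lambda>\<omega>. Hf (X \<omega>) i j)"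
    and "\<And>j. j < d \<Longrightarrow> integrable M (\<lambda>\<omega>. bf (X \<omega>) j)"
  shows "obj M X d Hf bf v
    = quad d (\<lambda>i j. \<integral>\<omega>. Hf (X \<omega>) i j \<partial>M) v / 2 - (\<Sum>j<d. (\<integral>\<omega>. bf (X \<omega>) j \<partial>M) * v j)"
proof -
  have "(\<integral>\<omega>. quad d (Hf (X \<omega>)) v \<partial>M)
      = (\<Sum>i<d. \<integral>\<omega>. (\<Sum>j<d. v i * Hf (X \<omega>) i j * v j) \<partial>M)"
    unfolding quad_def using assms(1)
    by (intro Bochner_Integration.integral_sum Bochner_Integration.integrable_sum) simp
  also have "\<dots> = quad d (\<lambda>i j. \<integral>\<omega>. Hf (X \<omega>) i j \<partial>M) v"
    unfolding quad_def using assms(1)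
    by (intro sum.cong refl) (simp add: Bochner_Integration.integral_sum)
  finally have "(\<integral>\<omega>. quad d (Hf (X \<omega>)) v \<partial>M) = quad d (\<lambda>i j. \<integral>\<omega>. Hf (X \<omega>) i j \<partial>M) v" .
  moreover have "(\<integral>\<omega>. (\<Sum>j<d. bf (X \<omega>) j * v j) \<partial>M) = (\<Sum>j<d. (\<integral>\<omega>. bf (X \<omega>) j \<partial>M) * v j)"
    using assms(2) by (simp add: Bochner_Integration.integral_sum)
  moreover have "integrable M (\<lambda>\<omega>. quad d (Hf (X \<omega>)) v)"
    unfolding quad_def using assms(1) by (intro Bochner_Integration.integrable_sum) simp
  moreover have "integrable M (\<lambda>\<omega>. \<Sum>j<d. bf (X \<omega>) j * v j)"
    using assms(2) by (intro Bochner_Integration.integrable_sum) simp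
  ultimately show ?thesis unfolding obj_def loss_def by simp
qed

lemma cw_sgd_Suc:
  assumes "1 \<le> s"
  shows "cw_sgd d lam w1 Hf bf \<xi> (Suc s) \<omega> j = cw_sgd d lam w1 Hf bf \<xi> s \<omega> j
    - 1 / (lam j * (real s + 1))
      * ((\<Sum>k<d. Hf (\<xi> s \<omega>) j k * cw_sgd d lam w1 Hf bf \<xi> s \<omega> k) - bf (\<xi> s \<omega>) j)"
  using assms by (cases s) simp_all

text \<open>Feeding the coordinate projections \<open>\<lambda>i x. x i\<close> as samples turns the iterate into a
  function of the sample path \<open>x\<close>; it only depends on \<open>x 1, \<dots>, x (s - 1)\<close>.\<close>

lemma cw_sgd_eq_path:
  "cw_sgd d lam w1 Hf bf \<xi> s \<omega> = cw_sgd d lam w1 Hf bf (\<lambda>i x. x i) s (\<lambda>i. \<xi> i \<omega>)"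
  by (induction d lam w1 Hf bf \<xi> s \<omega> rule: cw_sgd.induct) simp_all

lemma cw_sgd_path_cong:
  assumes "\<And>i. 1 \<le> i \<Longrightarrow> i < s \<Longrightarrow> x i = y i"
  shows "cw_sgd d lam w1 Hf bf (\<lambda>i x. x i) s x = cw_sgd d lam w1 Hf bf (\<lambda>i x. x i) s y"
  using assms
proof (induction s)
  case (Suc s)
  then show ?case by (cases s) simp_all
qed simp

lemma cw_sgd_path_measurable:
  assumes "\<And>i j. i < d \<Longrightarrow> j < d \<Longrightarrow> (\<lambda>x. Hf x i j) \<in> borel_measurable S"
    and "\<And>j. j < d \<Longrightarrow> (\<lambda>x. bf x j) \<in> borel_measurable S"
    and "j < d"
  shows "(\<lambda>x. cw_sgd d lam w1 Hf bf (\<lambda>i x. x i) s x j) \<in> borel_measurable (PiM {1..<s} (\<lambda>_. S))"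
  using \<open>j < d\<close>
proof (induction s arbitrary: j)
  case (Suc s)
  let ?w = "cw_sgd d lam w1 Hf bf (\<lambda>i x. x i) s"
  show ?case
  proof (cases "s = 0")
    case False
    have past: "?w (restrict x {1..<s}) = ?w x" for x
      by (rule cw_sgd_path_cong) simp
    have w_meas: "(\<lambda>x. ?w x k) \<in> borel_measurable (PiM {1..<Suc s} (\<lambda>_. S))" if "k < d" for k
      using measurable_compose[OF measurable_restrict_subset Suc.IH[OF that], of "{1..<Suc s}"]
      unfolding past by simp
    have x_meas: "(\<lambda>x. x s) \<in> measurable (PiM {1..<Suc s} (\<lambda>_. S)) S"
      using False by (intro measurable_component_singleton) auto
    show ?thesis
      using False Suc.prems w_meas measurable_compose[OF x_meas] assms(1,2)
      by (simp add: cw_sgd_Suc[of s] del: cw_sgd.simps)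
  qed simp
qed simp

locale cw_sgd_model = prob_space M for M :: "'a measure" +
  fixes S :: "'s measure" and \<xi> :: "nat \<Rightarrow> 'a \<Rightarrow> 's"
    and Hf :: "'s \<Rightarrow> nat \<Rightarrow> nat \<Rightarrow> real" and bf :: "'s \<Rightarrow> nat \<Rightarrow> real"
    and d :: nat and lam :: "nat \<Rightarrow> real" and w1 :: "nat \<Rightarrow> real"
  assumes sample_measurable: "1 \<le> s \<Longrightarrow> \<xi> s \<in> measurable M S"
    and samples_indep: "indep_vars (\<lambda>_. S) \<xi> {1..}"
    and samples_identically_distributed: "1 \<le> s \<Longrightarrow> distr M S (\<xi> s) = distr M S (\<xi> 1)"
    and Hf_measurable: "i < d \<Longrightarrow> j < d \<Longrightarrow> (\<lambda>x. Hf x i j) \<in> borel_measurable S"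
    and bf_measurable: "j < d \<Longrightarrow> (\<lambda>x. bf x j) \<in> borel_measurable S"
    and Hf_integrable: "i < d \<Longrightarrow> j < d \<Longrightarrow> integrable M (\<lambda>\<omega>. Hf (\<xi> 1 \<omega>) i j)"
    and bf_integrable: "j < d \<Longrightarrow> integrable M (\<lambda>\<omega>. bf (\<xi> 1 \<omega>) j)"
    and lam_pos: "j < d \<Longrightarrow> 0 < lam j"
    and mean_Hf_diag: "i < d \<Longrightarrow> j < d \<Longrightarrow> (\<integral>\<omega>. Hf (\<xi> 1 \<omega>) i j \<partial>M) = (if i = j then lam i else 0)"
begin

definition mean_H :: "nat \<Rightarrow> nat \<Rightarrow> real" where
  "mean_H = (\<lambda>i j. \<integral>\<omega>. Hf (\<xi> 1 \<omega>) i j \<partial>M)"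

definition mean_b :: "nat \<Rightarrow> real" where
  "mean_b = (\<lambda>j. \<integral>\<omega>. bf (\<xi> 1 \<omega>) j \<partial>M)"

definition w_opt :: "nat \<Rightarrow> real" where
  "w_opt = (\<lambda>j. mean_b j / lam j)"

abbreviation iterate :: "nat \<Rightarrow> 'a \<Rightarrow> nat \<Rightarrow> real" where
  "iterate \<equiv> cw_sgd d lam w1 Hf bf \<xi>"

definition grad_noise :: "nat \<Rightarrow> 'a \<Rightarrow> nat \<Rightarrow> real" where
  "grad_noise = (\<lambda>s \<omega>. noise d mean_H mean_b Hf bf (iterate s \<omega>) (\<xi> s \<omega>))"

lemma mean_H_diag: "i < d \<Longrightarrow> j < d \<Longrightarrow> mean_H i j = (if i = j then lam i else 0)"
  unfolding mean_H_def by (rule mean_Hf_diag)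

lemma mean_b_eq: "j < d \<Longrightarrow> mean_b j = lam j * w_opt j"
  using lam_pos[of j] by (simp add: w_opt_def)

lemma obj_eq_diag:
  "obj M (\<xi> 1) d Hf bf u = (\<Sum>j<d. lam j * (u j)\<^sup>2 / 2 - lam j * w_opt j * u j)"
proof -
  have "obj M (\<xi> 1) d Hf bf u = quad d mean_H u / 2 - (\<Sum>j<d. mean_b j * u j)"
    unfolding mean_H_def mean_b_def
    by (intro obj_eq_quad_mean Hf_integrable bf_integrable)
  moreover have "(\<Sum>j<d. mean_b j * u j) = (\<Sum>j<d. lam j * w_opt j * u j)"
    by (rule sum.cong) (simp_all add: mean_b_eq)
  ultimately show ?thesis
    by (simp add: quad_diag[OF mean_H_diag] sum_divide_distrib sum_subtractf)
qed

lemma obj_sub_obj_opt: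
  "obj M (\<xi> 1) d Hf bf v - obj M (\<xi> 1) d Hf bf w_opt = (\<Sum>j<d. lam j * (v j - w_opt j)\<^sup>2) / 2"
proof -
  have "obj M (\<xi> 1) d Hf bf v - obj M (\<xi> 1) d Hf bf w_opt
      = (\<Sum>j<d. (lam j * (v j)\<^sup>2 / 2 - lam j * w_opt j * v j)
                 - (lam j * (w_opt j)\<^sup>2 / 2 - lam j * w_opt j * w_opt j))"
    unfolding obj_eq_diag by (rule sum_subtractf[symmetric])
  also have "\<dots> = (\<Sum>j<d. lam j * (v j - w_opt j)\<^sup>2 / 2)"
    by (rule sum.cong) (simp_all add: power2_eq_square algebra_simps)
  finally show ?thesis by (simp add: sum_divide_distrib)
qed

lemma sample_Hf_integrable:
  assumes "1 \<le> s" "i < d" "j < d"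
  shows "integrable M (\<lambda>\<omega>. Hf (\<xi> s \<omega>) i j)"
  using integral_comp_eq_of_distr_eq(1)[OF sample_measurable[OF assms(1)] sample_measurable[of 1]
      samples_identically_distributed[OF assms(1)] Hf_measurable[OF assms(2,3)]]
    Hf_integrable[OF assms(2,3)]
  by simp

lemma integral_sample_Hf:
  assumes "1 \<le> s" "i < d" "j < d"
  shows "(\<integral>\<omega>. Hf (\<xi> s \<omega>) i j \<partial>M) = mean_H i j"
  using integral_comp_eq_of_distr_eq(2)[OF sample_measurable[OF assms(1)] sample_measurable[of 1]
      samples_identically_distributed[OF assms(1)] Hf_measurable[OF assms(2,3)]]
  by (simp add: mean_H_def)

lemma sample_bf_integrable:
  assumes "1 \<le> s" "j < d"
  shows "integrable M (\<lambda>\<omega>. bf (\<xi> s \<omega>) j)"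
  using integral_comp_eq_of_distr_eq(1)[OF sample_measurable[OF assms(1)] sample_measurable[of 1]
      samples_identically_distributed[OF assms(1)] bf_measurable[OF assms(2)]]
    bf_integrable[OF assms(2)]
  by simp

lemma integral_sample_bf:
  assumes "1 \<le> s" "j < d"
  shows "(\<integral>\<omega>. bf (\<xi> s \<omega>) j \<partial>M) = mean_b j"
  using integral_comp_eq_of_distr_eq(2)[OF sample_measurable[OF assms(1)] sample_measurable[of 1]
      samples_identically_distributed[OF assms(1)] bf_measurable[OF assms(2)]]
  by (simp add: mean_b_def)

lemma iterate_eq_past:
  "iterate s \<omega> = cw_sgd d lam w1 Hf bf (\<lambda>i x. x i) s (restrict (\<lambda>i. \<xi> i \<omega>) {1..<s})"
  unfolding cw_sgd_eq_path[of _ _ _ _ _ \<xi>] by (rule cw_sgd_path_cong) simp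

lemma past_samples_measurable:
  "(\<lambda>\<omega>. restrict (\<lambda>i. \<xi> i \<omega>) {1..<s}) \<in> measurable M (PiM {1..<s} (\<lambda>_. S))"
  by (rule measurable_restrict) (simp add: sample_measurable)

lemma iterate_measurable:
  "j < d \<Longrightarrow> (\<lambda>\<omega>. iterate s \<omega> j) \<in> borel_measurable M"
  unfolding iterate_eq_past
  by (rule measurable_compose[OF past_samples_measurable cw_sgd_path_measurable])
    (simp_all add: Hf_measurable bf_measurable)

text \<open>Only the coordinates below \<open>d\<close> of the iterate are measurable: the others involve
  \<open>lam j\<close>, \<open>Hf x j k\<close> and \<open>bf x j\<close> for \<open>j \<ge> d\<close>, about which nothing is assumed.\<close>

lemma iterate_indep_sample:
  assumes "1 \<le> s" and g: "g \<in> borel_measurable (PiM {..<d} (\<lambda>_. borel))"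
    and h: "h \<in> borel_measurable S"
  shows "indep_var borel (\<lambda>\<omega>. g (restrict (iterate s \<omega>) {..<d})) borel (\<lambda>\<omega>. h (\<xi> s \<omega>))"
proof -
  have "indep_var (PiM {1..<s} (\<lambda>_. S)) (\<lambda>\<omega>. restrict (\<lambda>i. \<xi> i \<omega>) {1..<s})
      (PiM {s} (\<lambda>_. S)) (\<lambda>\<omega>. restrict (\<lambda>i. \<xi> i \<omega>) {s})"
    using assms(1) by (intro indep_var_restrict[OF samples_indep]) auto
  moreover have "(\<lambda>x. restrict (cw_sgd d lam w1 Hf bf (\<lambda>i x. x i) s x) {..<d})
      \<in> measurable (PiM {1..<s} (\<lambda>_. S)) (PiM {..<d} (\<lambda>_. borel))"
    by (intro measurable_restrict cw_sgd_path_measurable) (simp_all add: Hf_measurable bf_measurable)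
  moreover have "(\<lambda>x. x s) \<in> measurable (PiM {s} (\<lambda>_. S)) S"
    by (rule measurable_component_singleton) simp
  ultimately have "indep_var borel
      ((\<lambda>x. g (restrict (cw_sgd d lam w1 Hf bf (\<lambda>i x. x i) s x) {..<d})) \<circ> (\<lambda>\<omega>. restrict (\<lambda>i. \<xi> i \<omega>) {1..<s}))
      borel ((\<lambda>x. h (x s)) \<circ> (\<lambda>\<omega>. restrict (\<lambda>i. \<xi> i \<omega>) {s}))"
    using measurable_compose[OF _ g] measurable_compose[OF _ h] by (metis indep_var_compose)
  then show ?thesis
    unfolding iterate_eq_past by (simp add: comp_def)
qed

lemma grad_noise_eq:
  "grad_noise s \<omega> j = (\<Sum>k<d. (mean_H j k - Hf (\<xi> s \<omega>) j k) * iterate s \<omega> k) - (mean_b j - bf (\<xi> s \<omega>) j)"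
  by (simp add: grad_noise_def noise_def sum_subtractf left_diff_distrib)

lemma grad_noise_measurable:
  assumes "1 \<le> s" "j < d"
  shows "(\<lambda>\<omega>. grad_noise s \<omega> j) \<in> borel_measurable M"
proof -
  have "(\<lambda>\<omega>. Hf (\<xi> s \<omega>) j k) \<in> borel_measurable M" if "k < d" for k
    using measurable_compose[OF sample_measurable[OF assms(1)] Hf_measurable[OF assms(2) that]] .
  moreover have "(\<lambda>\<omega>. bf (\<xi> s \<omega>) j) \<in> borel_measurable M"
    using measurable_compose[OF sample_measurable[OF assms(1)] bf_measurable[OF assms(2)]] .
  ultimately show ?thesis
    unfolding grad_noise_eq using assms(2) iterate_measurable
    by (intro borel_measurable_diff borel_measurable_sum borel_measurable_times borel_measurable_const) auto
qed

lemma iterate_error_Suc: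
  assumes "1 \<le> s" "j < d"
  shows "iterate (Suc s) \<omega> j - w_opt j
    = real s / (real s + 1) * (iterate s \<omega> j - w_opt j) + 1 / (lam j * (real s + 1)) * grad_noise s \<omega> j"
proof -
  define g where "g = (\<Sum>k<d. Hf (\<xi> s \<omega>) j k * iterate s \<omega> k) - bf (\<xi> s \<omega>) j"
  have "(\<Sum>k<d. mean_H j k * iterate s \<omega> k) = (\<Sum>k<d. if k = j then lam j * iterate s \<omega> j else 0)"
    using assms(2) by (intro sum.cong) (simp_all add: mean_H_diag)
  then have "(\<Sum>k<d. mean_H j k * iterate s \<omega> k) = lam j * iterate s \<omega> j"
    using assms(2) by simp
  then have noise: "grad_noise s \<omega> j = lam j * (iterate s \<omega> j - w_opt j) - g"
    by (simp add: g_def grad_noise_def noise_def mean_b_eq[OF assms(2)] algebra_simps)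
  have step: "iterate (Suc s) \<omega> j = iterate s \<omega> j - 1 / (lam j * (real s + 1)) * g"
    using assms(1) by (simp add: g_def cw_sgd_Suc del: cw_sgd.simps)
  define c where "c = 1 / (lam j * (real s + 1))"
  define e where "e = iterate s \<omega> j - w_opt j"
  have c_lam: "c * lam j = 1 / (real s + 1)"
    using lam_pos[OF assms(2)] by (simp add: c_def)
  have "real s / (real s + 1) * e + c * grad_noise s \<omega> j
      = (real s / (real s + 1) + c * lam j) * e - c * g"
    by (simp add: noise e_def algebra_simps)
  also have "\<dots> = e - c * g"
    unfolding c_lam by (simp add: add_divide_distrib[symmetric])
  finally show ?thesis
    by (simp add: step c_def e_def)
qed

lemma iterate_sample_uncorrelated:
  fixes g :: "(nat \<Rightarrow> real) \<Rightarrow> real" and h :: "'s \<Rightarrow> real"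
  assumes "1 \<le> s" "g \<in> borel_measurable (PiM {..<d} (\<lambda>_. borel))"
    and "\<And>v. g (restrict v {..<d}) = g v" and "h \<in> borel_measurable S"
    and "integrable M (\<lambda>\<omega>. g (iterate s \<omega>))" "integrable M (\<lambda>\<omega>. h (\<xi> s \<omega>))"
    and "(\<integral>\<omega>. h (\<xi> s \<omega>) \<partial>M) = 0"
  shows "integrable M (\<lambda>\<omega>. g (iterate s \<omega>) * h (\<xi> s \<omega>))"
    and "(\<integral>\<omega>. g (iterate s \<omega>) * h (\<xi> s \<omega>) \<partial>M) = 0"
  using indep_var_integral_mult_eq_0[OF iterate_indep_sample[OF assms(1,2,4)]] assms(3,5-7)
  by simp_all

end

locale cw_sgd_square_integrable_noise = cw_sgd_model +
  assumes noise_square_integrable: "1 \<le> s \<Longrightarrow> j < d \<Longrightarrow> integrable M (\<lambda>\<omega>. (grad_noise s \<omega> j)\<^sup>2)"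
begin

lemma error_square_integrable:
  assumes "1 \<le> s" "j < d"
  shows "integrable M (\<lambda>\<omega>. (iterate s \<omega> j - w_opt j)\<^sup>2)"
  using assms(1)
proof (induction s rule: nat_induct_at_least)
  case (Suc s)
  have "integrable M (\<lambda>\<omega>. (real s / (real s + 1) * (iterate s \<omega> j - w_opt j)
      + 1 / (lam j * (real s + 1)) * grad_noise s \<omega> j)\<^sup>2)"
    using Suc assms(2) iterate_measurable grad_noise_measurable noise_square_integrable
    by (intro integrable_power2_lincomb) simp_all
  then show ?case
    by (simp add: iterate_error_Suc[OF Suc.hyps assms(2)] del: cw_sgd.simps)
qed simp

lemma iterate_square_integrable:
  assumes "1 \<le> s" "j < d"
  shows "integrable M (\<lambda>\<omega>. (iterate s \<omega> j)\<^sup>2)"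
proof -
  have "integrable M (\<lambda>\<omega>. (1 * (iterate s \<omega> j - w_opt j) + 1 * w_opt j)\<^sup>2)"
    using assms error_square_integrable iterate_measurable
    by (intro integrable_power2_lincomb) simp_all
  then show ?thesis by simp
qed

lemma error_iterate_Hf_uncorrelated:
  assumes "1 \<le> s" "j < d" "k < d"
  defines "X \<equiv> \<lambda>\<omega>. (iterate s \<omega> j - w_opt j) * iterate s \<omega> k * (mean_H j k - Hf (\<xi> s \<omega>) j k)"
  shows "integrable M X" and "(\<integral>\<omega>. X \<omega> \<partial>M) = 0"
proof -
  have g: "(\<lambda>v. (v j - w_opt j) * v k) \<in> borel_measurable (PiM {..<d} (\<lambda>_. borel))"
    using assms(2,3)
    by (intro borel_measurable_times borel_measurable_diff borel_measurable_const
        measurable_component_singleton) simp_all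
  have g_local: "(restrict v {..<d} j - w_opt j) * restrict v {..<d} k = (v j - w_opt j) * v k" for v
    using assms(2,3) by simp
  have h: "(\<lambda>y. mean_H j k - Hf y j k) \<in> borel_measurable S"
    using Hf_measurable[OF assms(2,3)] by simp
  have g_int: "integrable M (\<lambda>\<omega>. (iterate s \<omega> j - w_opt j) * iterate s \<omega> k)"
    by (rule integrable_mult_of_square_integrable)
      (simp_all add: borel_measurable_diff iterate_measurable[OF assms(2)] iterate_measurable[OF assms(3)]
        error_square_integrable[OF assms(1,2)] iterate_square_integrable[OF assms(1,3)])
  have h_int: "integrable M (\<lambda>\<omega>. mean_H j k - Hf (\<xi> s \<omega>) j k)"
    using sample_Hf_integrable[OF assms(1-3)] by simp
  have h_mean: "(\<integral>\<omega>. mean_H j k - Hf (\<xi> s \<omega>) j k \<partial>M) = 0"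
    using sample_Hf_integrable[OF assms(1-3)] integral_sample_Hf[OF assms(1-3)]
    by (simp add: prob_space)
  show "integrable M X" "(\<integral>\<omega>. X \<omega> \<partial>M) = 0"
    using iterate_sample_uncorrelated[OF assms(1) g g_local h g_int h_int h_mean]
    unfolding X_def by simp_all
qed

lemma error_bf_uncorrelated:
  assumes "1 \<le> s" "j < d"
  defines "X \<equiv> \<lambda>\<omega>. (iterate s \<omega> j - w_opt j) * (mean_b j - bf (\<xi> s \<omega>) j)"
  shows "integrable M X" and "(\<integral>\<omega>. X \<omega> \<partial>M) = 0"
proof -
  have g: "(\<lambda>v. v j - w_opt j) \<in> borel_measurable (PiM {..<d} (\<lambda>_. borel))"
    using assms(2)
    by (intro borel_measurable_diff borel_measurable_const measurable_component_singleton) simp_all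
  have g_local: "restrict v {..<d} j - w_opt j = v j - w_opt j" for v
    using assms(2) by simp
  have h: "(\<lambda>y. mean_b j - bf y j) \<in> borel_measurable S"
    using bf_measurable[OF assms(2)] by simp
  have g_int: "integrable M (\<lambda>\<omega>. iterate s \<omega> j - w_opt j)"
    by (rule square_integrable_imp_integrable)
      (simp_all add: borel_measurable_diff iterate_measurable[OF assms(2)]
        error_square_integrable[OF assms(1,2)])
  have h_int: "integrable M (\<lambda>\<omega>. mean_b j - bf (\<xi> s \<omega>) j)"
    using sample_bf_integrable[OF assms(1,2)] by simp
  have h_mean: "(\<integral>\<omega>. mean_b j - bf (\<xi> s \<omega>) j \<partial>M) = 0"
    using sample_bf_integrable[OF assms(1,2)] integral_sample_bf[OF assms(1,2)]
    by (simp add: prob_space)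
  show "integrable M X" "(\<integral>\<omega>. X \<omega> \<partial>M) = 0"
    using iterate_sample_uncorrelated[OF assms(1) g g_local h g_int h_int h_mean]
    unfolding X_def by simp_all
qed

lemma error_noise_uncorrelated:
  assumes "1 \<le> s" "j < d"
  shows "integrable M (\<lambda>\<omega>. (iterate s \<omega> j - w_opt j) * grad_noise s \<omega> j)"
    and "(\<integral>\<omega>. (iterate s \<omega> j - w_opt j) * grad_noise s \<omega> j \<partial>M) = 0"
proof -
  let ?e = "\<lambda>\<omega>. iterate s \<omega> j - w_opt j"
  let ?X = "\<lambda>k \<omega>. ?e \<omega> * iterate s \<omega> k * (mean_H j k - Hf (\<xi> s \<omega>) j k)"
  have "(\<lambda>\<omega>. ?e \<omega> * grad_noise s \<omega> j)
      = (\<lambda>\<omega>. (\<Sum>k<d. ?X k \<omega>) - ?e \<omega> * (mean_b j - bf (\<xi> s \<omega>) j))"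
    by (simp add: grad_noise_eq sum_distrib_left algebra_simps)
  moreover have "integrable M (\<lambda>\<omega>. \<Sum>k<d. ?X k \<omega>)"
    using error_iterate_Hf_uncorrelated(1)[OF assms]
    by (intro Bochner_Integration.integrable_sum) simp
  moreover have "(\<integral>\<omega>. (\<Sum>k<d. ?X k \<omega>) \<partial>M) = 0"
    using error_iterate_Hf_uncorrelated[OF assms]
    by (subst Bochner_Integration.integral_sum) simp_all
  ultimately show "integrable M (\<lambda>\<omega>. ?e \<omega> * grad_noise s \<omega> j)"
    "(\<integral>\<omega>. ?e \<omega> * grad_noise s \<omega> j \<partial>M) = 0"
    using error_bf_uncorrelated[OF assms] by simp_all
qed

lemma error_second_moment_Suc:
  assumes "1 \<le> s" "j < d"
  shows "(\<integral>\<omega>. (iterate (Suc s) \<omega> j - w_opt j)\<^sup>2 \<partial>M)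
    = (real s / (real s + 1))\<^sup>2 * (\<integral>\<omega>. (iterate s \<omega> j - w_opt j)\<^sup>2 \<partial>M)
      + (1 / (lam j * (real s + 1)))\<^sup>2 * (\<integral>\<omega>. (grad_noise s \<omega> j)\<^sup>2 \<partial>M)"
  unfolding iterate_error_Suc[OF assms]
  using error_square_integrable[OF assms] noise_square_integrable[OF assms]
    error_noise_uncorrelated[OF assms]
  by (rule integral_power2_lincomb_uncorrelated)

lemma weighted_error_step:
  assumes "1 \<le> s" "j < d"
    and noise_bound: "(\<integral>\<omega>. (grad_noise s \<omega> j)\<^sup>2 \<partial>M) \<le> \<sigma>\<^sup>2 * lam j"
  shows "(real s + 1)\<^sup>2 * (lam j * (\<integral>\<omega>. (iterate (Suc s) \<omega> j - w_opt j)\<^sup>2 \<partial>M))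
    \<le> (real s)\<^sup>2 * (lam j * (\<integral>\<omega>. (iterate s \<omega> j - w_opt j)\<^sup>2 \<partial>M)) + \<sigma>\<^sup>2"
proof -
  have lam: "0 < lam j" using lam_pos[OF assms(2)] .
  have a: "(real s + 1)\<^sup>2 * (real s / (real s + 1))\<^sup>2 = (real s)\<^sup>2"
    by (simp add: power_divide)
  have b: "(real s + 1)\<^sup>2 * (1 / (lam j * (real s + 1)))\<^sup>2 * lam j = 1 / lam j"
    using lam by (simp add: power_divide power_mult_distrib power2_eq_square)
  have "(real s + 1)\<^sup>2 * (lam j * (\<integral>\<omega>. (iterate (Suc s) \<omega> j - w_opt j)\<^sup>2 \<partial>M))
      = ((real s + 1)\<^sup>2 * (real s / (real s + 1))\<^sup>2) * (lam j * (\<integral>\<omega>. (iterate s \<omega> j - w_opt j)\<^sup>2 \<partial>M))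
        + ((real s + 1)\<^sup>2 * (1 / (lam j * (real s + 1)))\<^sup>2 * lam j) * (\<integral>\<omega>. (grad_noise s \<omega> j)\<^sup>2 \<partial>M)"
    unfolding error_second_moment_Suc[OF assms(1,2)] by (simp only: algebra_simps)
  also have "\<dots> = (real s)\<^sup>2 * (lam j * (\<integral>\<omega>. (iterate s \<omega> j - w_opt j)\<^sup>2 \<partial>M))
        + (\<integral>\<omega>. (grad_noise s \<omega> j)\<^sup>2 \<partial>M) / lam j"
    unfolding a b by simp
  also have "\<dots> \<le> (real s)\<^sup>2 * (lam j * (\<integral>\<omega>. (iterate s \<omega> j - w_opt j)\<^sup>2 \<partial>M)) + \<sigma>\<^sup>2"
    using noise_bound lam by (simp add: divide_le_eq)
  finally show ?thesis .
qed

lemma expected_weighted_error_bound: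
  assumes noise_bound: "\<And>s j. 1 \<le> s \<Longrightarrow> j < d \<Longrightarrow> (\<integral>\<omega>. (grad_noise s \<omega> j)\<^sup>2 \<partial>M) \<le> \<sigma>\<^sup>2 * lam j"
  shows "(\<integral>\<omega>. (\<Sum>j<d. lam j * (iterate (Suc t) \<omega> j - w_opt j)\<^sup>2) \<partial>M)
    \<le> (\<Sum>j<d. lam j * (w1 j - w_opt j)\<^sup>2) / (real t + 1)\<^sup>2 + real t / (real t + 1)\<^sup>2 * real d * \<sigma>\<^sup>2"
proof -
  define D where "D s = (\<Sum>j<d. lam j * (\<integral>\<omega>. (iterate s \<omega> j - w_opt j)\<^sup>2 \<partial>M))" for s
  have "(real s + 1)\<^sup>2 * D (Suc s) \<le> (real s)\<^sup>2 * D s + real d * \<sigma>\<^sup>2" if "1 \<le> s" for s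
  proof -
    have "(real s + 1)\<^sup>2 * D (Suc s)
        = (\<Sum>j<d. (real s + 1)\<^sup>2 * (lam j * (\<integral>\<omega>. (iterate (Suc s) \<omega> j - w_opt j)\<^sup>2 \<partial>M)))"
      by (simp add: D_def sum_distrib_left)
    also have "\<dots> \<le> (\<Sum>j<d. (real s)\<^sup>2 * (lam j * (\<integral>\<omega>. (iterate s \<omega> j - w_opt j)\<^sup>2 \<partial>M)) + \<sigma>\<^sup>2)"
      using that noise_bound by (intro sum_mono weighted_error_step) simp_all
    also have "\<dots> = (real s)\<^sup>2 * D s + real d * \<sigma>\<^sup>2"
      by (simp add: D_def sum.distrib sum_distrib_left)
    finally show ?thesis .
  qed
  then have "(real t + 1)\<^sup>2 * D (Suc t) \<le> D 1 + real t * (real d * \<sigma>\<^sup>2)"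
    by (rule bound_of_scaled_recursion)
  moreover have "D 1 = (\<Sum>j<d. lam j * (w1 j - w_opt j)\<^sup>2)"
    by (simp add: D_def prob_space)
  moreover have "(\<integral>\<omega>. (\<Sum>j<d. lam j * (iterate (Suc t) \<omega> j - w_opt j)\<^sup>2) \<partial>M) = D (Suc t)"
    unfolding D_def using error_square_integrable[of "Suc t"]
    by (subst Bochner_Integration.integral_sum) simp_all
  ultimately show ?thesis
    by (simp add: pos_le_divide_eq add_divide_distrib[symmetric] mult.commute mult.left_commute)
qed

end

theorem proposition1:
  fixes M :: "'a measure" and S :: "'s measure" and \<xi> :: "nat \<Rightarrow> 'a \<Rightarrow> 's"
    and Hf :: "'s \<Rightarrow> nat \<Rightarrow> nat \<Rightarrow> real" and bf :: "'s \<Rightarrow> nat \<Rightarrow> real"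
    and d :: nat and lam :: "nat \<Rightarrow> real" and w1 :: "nat \<Rightarrow> real"
    and \<sigma> :: real and t :: nat
  defines "Hm \<equiv> \<lambda>i j. integral\<^sup>L M (\<lambda>\<omega>. Hf (\<xi> 1 \<omega>) i j)"
    and "bm \<equiv> \<lambda>j. integral\<^sup>L M (\<lambda>\<omega>. bf (\<xi> 1 \<omega>) j)"
    and "wstar \<equiv> \<lambda>j. integral\<^sup>L M (\<lambda>\<omega>. bf (\<xi> 1 \<omega>) j) / lam j"
    and "w \<equiv> cw_sgd d lam w1 Hf bf \<xi>"
    and "n \<equiv> \<lambda>s \<omega>. noise d (\<lambda>i j. integral\<^sup>L M (\<lambda>\<omega>. Hf (\<xi> 1 \<omega>) i j)) (\<lambda>j. integral\<^sup>L M (\<lambda>\<omega>. bf (\<xi> 1 \<omega>) j)) Hf bf (cw_sgd d lam w1 Hf bf \<xi> s \<omega>) (\<xi> s \<omega>)"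
    and "f \<equiv> obj M (\<xi> 1) d Hf bf"
  assumes "prob_space M"
    and "\<forall>s\<ge>1. \<xi> s \<in> measurable M S"
    and "prob_space.indep_vars M (\<lambda>_. S) \<xi> {1..}"
    and "\<forall>s\<ge>1. distr M S (\<xi> s) = distr M S (\<xi> 1)"
    and "\<forall>i<d. \<forall>j<d. (\<lambda>x. Hf x i j) \<in> borel_measurable S"
    and "\<forall>j<d. (\<lambda>x. bf x j) \<in> borel_measurable S"
    and "\<forall>i<d. \<forall>j<d. integrable M (\<lambda>\<omega>. Hf (\<xi> 1 \<omega>) i j)"
    and "\<forall>j<d. integrable M (\<lambda>\<omega>. bf (\<xi> 1 \<omega>) j)"
    and "\<forall>x. \<forall>i<d. \<forall>j<d. Hf x i j = Hf x j i"
    and "\<forall>j<d. lam j > 0"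
    and "\<forall>i j. i \<le> j \<longrightarrow> j < d \<longrightarrow> lam j \<le> lam i"
    and "\<forall>i<d. \<forall>j<d. Hm i j = (if i = j then lam i else 0)"
    and "\<forall>s\<ge>1. \<forall>i<d. \<forall>j<d. integrable M (\<lambda>\<omega>. n s \<omega> i * n s \<omega> j)"
    and "\<forall>s\<ge>1. psd_le d (\<lambda>i j. integral\<^sup>L M (\<lambda>\<omega>. n s \<omega> i * n s \<omega> j))
                          (\<lambda>i j. \<sigma>\<^sup>2 * Hm i j)"
    and "t \<ge> 1"
  shows "2 * integral\<^sup>L M (\<lambda>\<omega>. f (w (t + 1) \<omega>) - f wstar)
           = integral\<^sup>L M (\<lambda>\<omega>. \<Sum>j<d. lam j * (w (t + 1) \<omega> j - wstar j)\<^sup>2)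
       \<and> integral\<^sup>L M (\<lambda>\<omega>. \<Sum>j<d. lam j * (w (t + 1) \<omega> j - wstar j)\<^sup>2)
           \<le> (\<Sum>j<d. lam j * (w1 j - wstar j)\<^sup>2) / (real t + 1)\<^sup>2
              + real t / (real t + 1)\<^sup>2 * real d * \<sigma>\<^sup>2"
proof -
  have model: "cw_sgd_model M S \<xi> Hf bf d lam"
    by (intro cw_sgd_model.intro cw_sgd_model_axioms.intro assms(7,9)
        assms(8,10-14,16)[rule_format] assms(18)[unfolded assms(1), rule_format])
  interpret cw_sgd_model M S \<xi> Hf bf d lam w1 by (fact model)
  have n_eq: "n = grad_noise"
    unfolding assms(5) grad_noise_def mean_H_def mean_b_def ..
  have "integrable M (\<lambda>\<omega>. (grad_noise s \<omega> j)\<^sup>2)" if "1 \<le> s" "j < d" for s j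
    using assms(19) that unfolding n_eq power2_eq_square by blast
  then interpret cw_sgd_square_integrable_noise M S \<xi> Hf bf d lam w1
    by (intro cw_sgd_square_integrable_noise.intro model cw_sgd_square_integrable_noise_axioms.intro)
  have noise_bound: "(\<integral>\<omega>. (grad_noise s \<omega> j)\<^sup>2 \<partial>M) \<le> \<sigma>\<^sup>2 * lam j" if "1 \<le> s" "j < d" for s j
    using psd_le_diag[OF assms(20)[rule_format, OF that(1)] that(2)]
      assms(18)[rule_format, OF that(2) that(2)]
    unfolding n_eq power2_eq_square by simp
  have excess: "f v - f wstar = (\<Sum>j<d. lam j * (v j - wstar j)\<^sup>2) / 2" for v
    using obj_sub_obj_opt unfolding assms(3,6) w_opt_def mean_b_def .
  have "w (t + 1) = iterate (Suc t)" "wstar = w_opt"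
    unfolding assms(3,4) w_opt_def mean_b_def by simp_all
  then show ?thesis
    using expected_weighted_error_bound[OF noise_bound, of t] unfolding excess by simp
qed

end
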